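(* Let $P$ be a finite poset. Then $P$ is a forest with duplications if and only if every vertex of the graph $\Gamma(P)$ has degree at most one, i.e. $\Gamma(P)$ is a disjoint union of isolated edges and isolated vertices.
   Context: A (lower) order ideal of $P$ is a subset $J$ with $y\in J$, $x\preceq y$ implying $x\in J$; it is a connected order ideal if it is nonempty and its Hasse diagram is connected. Two order ideals $J_1,J_2$ intersect non-trivially if $J_1\cap J_2\neq\emptyset$ and neither of $J_1,J_2$ contains the other. The graph $\Gamma(P)$ has as vertex set the connected order ideals of $P$, with an edge between two of them exactly when they intersect non-trivially. Forests with duplications are the finite posets obtainable from one-element posets by repeated application of the following operations: (i) Disjoint union: for posets $P,Q$, take the disjoint union of the sets and of the relations, giving $P\oplus Q$. (ii) Hanging: for posets $P,Q$ and an element $a\in P$, on the disjoint union of $P$ and $Q$ add the relations $q\prec a$ for every $q\in Q$ and close transitively, giving $P\,^aQ$. (iii) Duplication: given a poset of the form $P=Q_1\,^a\,Q_2$ (obtained by hanging $Q_2$ below $a\in Q_1$) where $a$ is a minimal element of $Q_1$, add a new element $a'$ with relations $q\preceq a'$ for all $q\in Q_2$ and $a'\preceq q$ for all $q\in Q_1$ with $q\succ a$ (closed transitively), giving $P^{(a)}$. *)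

theory Defs
  imports Main
begin

text \<open>A finite poset is represented by a carrier set A together with a relation R
  (the non-strict order); only the values of R on A are relevant.\<close>

definition is_poset :: "'a set \<Rightarrow> ('a \<Rightarrow> 'a \<Rightarrow> bool) \<Rightarrow> bool" where
  "is_poset A R \<longleftrightarrow>
     (\<forall>x\<in>A. R x x) \<and>
     (\<forall>x\<in>A. \<forall>y\<in>A. R x y \<and> R y x \<longrightarrow> x = y) \<and>
     (\<forall>x\<in>A. \<forall>y\<in>A. \<forall>z\<in>A. R x y \<and> R y z \<longrightarrow> R x z)"

definition order_ideal :: "'a set \<Rightarrow> ('a \<Rightarrow> 'a \<Rightarrow> bool) \<Rightarrow> 'a set \<Rightarrow> bool" where
  "order_ideal A R J \<longleftrightarrow> J \<subseteq> A \<and> (\<forall>y\<in>J. \<forall>x\<in>A. R x y \<longrightarrow> x \<in> J)"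

definition covers :: "'a set \<Rightarrow> ('a \<Rightarrow> 'a \<Rightarrow> bool) \<Rightarrow> 'a \<Rightarrow> 'a \<Rightarrow> bool" where
  "covers J R x y \<longleftrightarrow> x \<in> J \<and> y \<in> J \<and> x \<noteq> y \<and> R x y \<and>
     \<not> (\<exists>z\<in>J. z \<noteq> x \<and> z \<noteq> y \<and> R x z \<and> R z y)"

definition hasse_edges :: "'a set \<Rightarrow> ('a \<Rightarrow> 'a \<Rightarrow> bool) \<Rightarrow> ('a \<times> 'a) set" where
  "hasse_edges J R = {(x, y). covers J R x y \<or> covers J R y x}"

definition connected_order_ideal :: "'a set \<Rightarrow> ('a \<Rightarrow> 'a \<Rightarrow> bool) \<Rightarrow> 'a set \<Rightarrow> bool" where
  "connected_order_ideal A R J \<longleftrightarrow> order_ideal A R J \<and> J \<noteq> {} \<and>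
     (\<forall>x\<in>J. \<forall>y\<in>J. (x, y) \<in> (hasse_edges J R)\<^sup>*)"

definition intersect_nontrivially :: "'a set \<Rightarrow> 'a set \<Rightarrow> bool" where
  "intersect_nontrivially J1 J2 \<longleftrightarrow> J1 \<inter> J2 \<noteq> {} \<and> \<not> J1 \<subseteq> J2 \<and> \<not> J2 \<subseteq> J1"

definition gamma_degree :: "'a set \<Rightarrow> ('a \<Rightarrow> 'a \<Rightarrow> bool) \<Rightarrow> 'a set \<Rightarrow> nat" where
  "gamma_degree A R J = card {J'. connected_order_ideal A R J' \<and> intersect_nontrivially J J'}"

definition disj_union_rel ::
  "'a set \<Rightarrow> ('a \<Rightarrow> 'a \<Rightarrow> bool) \<Rightarrow> 'a set \<Rightarrow> ('a \<Rightarrow> 'a \<Rightarrow> bool) \<Rightarrow> 'a \<Rightarrow> 'a \<Rightarrow> bool" where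
  "disj_union_rel A R B S x y \<longleftrightarrow> (x \<in> A \<and> y \<in> A \<and> R x y) \<or> (x \<in> B \<and> y \<in> B \<and> S x y)"

text \<open>Hanging (B,S) below a \<in> A (already transitively closed).\<close>
definition hang_rel ::
  "'a set \<Rightarrow> ('a \<Rightarrow> 'a \<Rightarrow> bool) \<Rightarrow> 'a \<Rightarrow> 'a set \<Rightarrow> ('a \<Rightarrow> 'a \<Rightarrow> bool) \<Rightarrow> 'a \<Rightarrow> 'a \<Rightarrow> bool" where
  "hang_rel A R a B S x y \<longleftrightarrow> disj_union_rel A R B S x y \<or> (x \<in> B \<and> y \<in> A \<and> R a y)"

text \<open>Duplication of a in (A,R) hung with (B,S) below a, new element a' (transitively closed).\<close>
definition dup_rel ::
  "'a set \<Rightarrow> ('a \<Rightarrow> 'a \<Rightarrow> bool) \<Rightarrow> 'a \<Rightarrow> 'a set \<Rightarrow> ('a \<Rightarrow> 'a \<Rightarrow> bool) \<Rightarrow> 'a \<Rightarrow> 'a \<Rightarrow> 'a \<Rightarrow> bool" where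
  "dup_rel A R a B S a' x y \<longleftrightarrow> hang_rel A R a B S x y \<or> (x = a' \<and> y = a') \<or>
     (x \<in> B \<and> y = a') \<or> (x = a' \<and> y \<in> A \<and> y \<noteq> a \<and> R a y)"

inductive forest_dup :: "'a set \<Rightarrow> ('a \<Rightarrow> 'a \<Rightarrow> bool) \<Rightarrow> bool" where
  single: "forest_dup {x} (\<lambda>u v. u = v)"
| iso: "forest_dup A R \<Longrightarrow> bij_betw f A B \<Longrightarrow>
        (\<forall>x\<in>A. \<forall>y\<in>A. R x y \<longleftrightarrow> S (f x) (f y)) \<Longrightarrow> forest_dup B S"
| union: "forest_dup A R \<Longrightarrow> forest_dup B S \<Longrightarrow> A \<inter> B = {} \<Longrightarrow>
        forest_dup (A \<union> B) (disj_union_rel A R B S)"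
| hang: "forest_dup A R \<Longrightarrow> forest_dup B S \<Longrightarrow> A \<inter> B = {} \<Longrightarrow> a \<in> A \<Longrightarrow>
        forest_dup (A \<union> B) (hang_rel A R a B S)"
| dup: "forest_dup A R \<Longrightarrow> forest_dup B S \<Longrightarrow> A \<inter> B = {} \<Longrightarrow> a \<in> A \<Longrightarrow>
        (\<forall>y\<in>A. R y a \<longrightarrow> y = a) \<Longrightarrow> a' \<notin> A \<Longrightarrow> a' \<notin> B \<Longrightarrow>
        forest_dup (insert a' (A \<union> B)) (dup_rel A R a B S a')"

end

theory Submission
  imports Defs
begin

text \<open>Call two incomparable elements partners if they have a common lower bound. Both sides of
  the equivalence say that every element has at most one partner.

  For \<open>\<Gamma>(P)\<close>: the principal ideals of x and u intersect non-trivially exactly when x and u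
  are partners. If partners are unique, every connected order ideal is principal or the union of
  the principal ideals of two partners; the latter kind has no neighbours at all, and the
  neighbours of the principal ideal of x are the principal ideals of the partners of x.

  For forests with duplications: disjoint union and hanging create no new partners, and
  duplication creates only the pair a, a'. Conversely, by induction on the size of P: a minimal
  element without strict upper bounds splits off as a disjoint summand, and one whose strict upper
  bounds have a least element a is hung below a. Otherwise a partner pair a1, a2 minimising the
  union of their strict lower sets has equal strict lower sets, and P arises by duplicating a1
  after hanging the strict lower set of a1 below it.\<close>

abbreviation minimal_in :: "'a set \<Rightarrow> ('a \<Rightarrow> 'a \<Rightarrow> bool) \<Rightarrow> 'a \<Rightarrow> bool" where
  "minimal_in S R m \<equiv> m \<in> S \<and> (\<forall>y\<in>S. R y m \<longrightarrow> y = m)"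

abbreviation maximal_in :: "'a set \<Rightarrow> ('a \<Rightarrow> 'a \<Rightarrow> bool) \<Rightarrow> 'a \<Rightarrow> bool" where
  "maximal_in S R m \<equiv> m \<in> S \<and> (\<forall>y\<in>S. R m y \<longrightarrow> y = m)"

definition lower_set :: "'a set \<Rightarrow> ('a \<Rightarrow> 'a \<Rightarrow> bool) \<Rightarrow> 'a \<Rightarrow> 'a set" where
  "lower_set A R x = {y\<in>A. R y x}"

definition strict_lower_set :: "'a set \<Rightarrow> ('a \<Rightarrow> 'a \<Rightarrow> bool) \<Rightarrow> 'a \<Rightarrow> 'a set" where
  "strict_lower_set A R x = {y\<in>A. R y x \<and> y \<noteq> x}"

definition strict_upper_set :: "'a set \<Rightarrow> ('a \<Rightarrow> 'a \<Rightarrow> bool) \<Rightarrow> 'a \<Rightarrow> 'a set" where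
  "strict_upper_set A R x = {y\<in>A. R x y \<and> y \<noteq> x}"

lemma is_poset_refl: "is_poset A R \<Longrightarrow> x \<in> A \<Longrightarrow> R x x"
  unfolding is_poset_def by blast

lemma is_poset_antisym: "is_poset A R \<Longrightarrow> x \<in> A \<Longrightarrow> y \<in> A \<Longrightarrow> R x y \<Longrightarrow> R y x \<Longrightarrow> x = y"
  unfolding is_poset_def by blast

lemma is_poset_trans:
  "is_poset A R \<Longrightarrow> x \<in> A \<Longrightarrow> y \<in> A \<Longrightarrow> z \<in> A \<Longrightarrow> R x y \<Longrightarrow> R y z \<Longrightarrow> R x z"
  unfolding is_poset_def by blast

lemma is_poset_subset: "is_poset A R \<Longrightarrow> S \<subseteq> A \<Longrightarrow> is_poset S R"
  unfolding is_poset_def by blast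

lemma is_poset_converse: "is_poset A R \<Longrightarrow> is_poset A (\<lambda>x y. R y x)"
  unfolding is_poset_def by blast

lemma ex_minimal_below:
  assumes fin: "finite S" and po: "is_poset A R" and SA: "S \<subseteq> A" and x: "x \<in> S"
  shows "\<exists>m. minimal_in S R m \<and> R m x"
proof -
  let ?below = "\<lambda>m. {y\<in>S. R y m}"
  have "x \<in> S \<and> R x x"
    using x SA is_poset_refl[OF po] by blast
  then obtain m where m: "m \<in> S" "R m x"
    and least: "\<And>m'. m' \<in> S \<and> R m' x \<Longrightarrow> card (?below m) \<le> card (?below m')"
    using ex_has_least_nat[of "\<lambda>m. m \<in> S \<and> R m x" x "\<lambda>m. card (?below m)"] by blast
  have "y = m" if y: "y \<in> S" "R y m" for y
  proof (rule ccontr)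
    assume "y \<noteq> m"
    have "?below y \<subseteq> ?below m"
      using y m SA is_poset_trans[OF po] by blast
    moreover have "m \<in> ?below m" "m \<notin> ?below y"
      using y m \<open>y \<noteq> m\<close> SA is_poset_refl[OF po] is_poset_antisym[OF po] by blast+
    ultimately have "card (?below y) < card (?below m)"
      using fin by (intro psubset_card_mono) auto
    moreover have "R y x"
      using y m x SA is_poset_trans[OF po] by blast
    ultimately show False
      using least[of y] y(1) by linarith
  qed
  then show ?thesis
    using m by blast
qed

lemma ex_maximal_above:
  assumes "finite S" "is_poset A R" "S \<subseteq> A" "x \<in> S"
  shows "\<exists>m. maximal_in S R m \<and> R x m"
  using ex_minimal_below[OF assms(1) is_poset_converse[OF assms(2)] assms(3,4)] by simp

lemma lower_set_subset: "lower_set A R x \<subseteq> A"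
  unfolding lower_set_def by blast

lemma lower_set_self: "is_poset A R \<Longrightarrow> x \<in> A \<Longrightarrow> x \<in> lower_set A R x"
  unfolding lower_set_def by (simp add: is_poset_refl)

lemma lower_set_subset_iff:
  assumes po: "is_poset A R" and "x \<in> A" "u \<in> A"
  shows "lower_set A R x \<subseteq> lower_set A R u \<longleftrightarrow> R x u"
proof
  assume "lower_set A R x \<subseteq> lower_set A R u"
  then show "R x u"
    using lower_set_self[OF po \<open>x \<in> A\<close>] unfolding lower_set_def by blast
next
  assume "R x u"
  then show "lower_set A R x \<subseteq> lower_set A R u"
    using assms is_poset_trans[OF po] unfolding lower_set_def by blast
qed

lemma lower_set_mono:
  "is_poset A R \<Longrightarrow> x \<in> A \<Longrightarrow> u \<in> lower_set A R x \<Longrightarrow> lower_set A R u \<subseteq> lower_set A R x"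
  using lower_set_subset_iff[of A R u x] lower_set_subset by (auto simp: lower_set_def)

lemma lower_set_inject:
  assumes "is_poset A R" "x \<in> A" "u \<in> A"
  shows "lower_set A R x = lower_set A R u \<longleftrightarrow> x = u"
  using lower_set_subset_iff[OF assms] lower_set_subset_iff[OF assms(1,3,2)] is_poset_antisym[OF assms]
  by auto

lemma order_ideal_lower_set:
  assumes po: "is_poset A R" and "x \<in> A"
  shows "order_ideal A R (lower_set A R x)"
  unfolding order_ideal_def lower_set_def using assms is_poset_trans[OF po] by blast

definition partners :: "'a set \<Rightarrow> ('a \<Rightarrow> 'a \<Rightarrow> bool) \<Rightarrow> 'a \<Rightarrow> 'a \<Rightarrow> bool" where
  "partners A R x y \<longleftrightarrow> \<not> R x y \<and> \<not> R y x \<and> (\<exists>z\<in>A. R z x \<and> R z y)"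

definition unique_partners :: "'a set \<Rightarrow> ('a \<Rightarrow> 'a \<Rightarrow> bool) \<Rightarrow> bool" where
  "unique_partners A R \<longleftrightarrow>
     (\<forall>x\<in>A. \<forall>y\<in>A. \<forall>y'\<in>A. partners A R x y \<and> partners A R x y' \<longrightarrow> y = y')"

lemma unique_partnersD:
  "unique_partners A R \<Longrightarrow> x \<in> A \<Longrightarrow> y \<in> A \<Longrightarrow> y' \<in> A \<Longrightarrow>
   partners A R x y \<Longrightarrow> partners A R x y' \<Longrightarrow> y = y'"
  unfolding unique_partners_def by blast

lemma partners_sym: "partners A R x y \<Longrightarrow> partners A R y x"
  unfolding partners_def by blast

lemma unique_partners_subset: "unique_partners A R \<Longrightarrow> S \<subseteq> A \<Longrightarrow> unique_partners S R"
  unfolding unique_partners_def partners_def by blast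

lemma intersect_nontrivially_sym: "intersect_nontrivially J K \<Longrightarrow> intersect_nontrivially K J"
  unfolding intersect_nontrivially_def by blast

lemma intersect_nontrivially_lower_sets_iff:
  assumes "is_poset A R" "x \<in> A" "u \<in> A"
  shows "intersect_nontrivially (lower_set A R x) (lower_set A R u) \<longleftrightarrow> partners A R x u"
  unfolding intersect_nontrivially_def partners_def
  using lower_set_subset_iff[OF assms(1)] assms by (auto simp: lower_set_def)

lemma converse_hasse_edges: "(hasse_edges J R)\<inverse> = hasse_edges J R"
  unfolding hasse_edges_def by auto

lemma rtrancl_hasse_edges_if_le:
  assumes fin: "finite J" and po: "is_poset A R" and JA: "J \<subseteq> A"
  shows "u \<in> J \<Longrightarrow> v \<in> J \<Longrightarrow> R u v \<Longrightarrow> (u, v) \<in> (hasse_edges J R)\<^sup>*"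
proof (induction "card {w\<in>J. R u w \<and> R w v}" arbitrary: u v rule: less_induct)
  case less
  let ?I = "\<lambda>u v. {w\<in>J. R u w \<and> R w v}"
  have uv: "u \<in> A" "v \<in> A"
    using less.prems JA by auto
  show ?case
  proof (cases "u = v \<or> covers J R u v")
    case True
    then show ?thesis
      unfolding hasse_edges_def by auto
  next
    case False
    then obtain z where z: "z \<in> J" "z \<noteq> u" "z \<noteq> v" "R u z" "R z v"
      using less.prems unfolding covers_def by blast
    have zA: "z \<in> A"
      using z JA by auto
    have "?I u z \<subseteq> ?I u v" "?I z v \<subseteq> ?I u v"
      using z zA uv JA is_poset_trans[OF po] by blast+
    moreover have "v \<in> ?I u v" "v \<notin> ?I u z" "u \<in> ?I u v" "u \<notin> ?I z v"
      using less.prems z zA uv is_poset_refl[OF po] is_poset_antisym[OF po] by blast+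
    ultimately have "card (?I u z) < card (?I u v)" "card (?I z v) < card (?I u v)"
      using fin by (auto intro!: psubset_card_mono)
    then have "(u, z) \<in> (hasse_edges J R)\<^sup>*" "(z, v) \<in> (hasse_edges J R)\<^sup>*"
      using less.hyps less.prems z by blast+
    then show ?thesis
      by (rule rtrancl_trans)
  qed
qed

lemma connected_order_ideal_lower_set:
  assumes fin: "finite A" and po: "is_poset A R" and x: "x \<in> A"
  shows "connected_order_ideal A R (lower_set A R x)"
proof -
  let ?J = "lower_set A R x"
  have JA: "?J \<subseteq> A"
    by (rule lower_set_subset)
  have to_top: "(u, x) \<in> (hasse_edges ?J R)\<^sup>*" if "u \<in> ?J" for u
    using rtrancl_hasse_edges_if_le[OF finite_subset[OF JA fin] po JA] that lower_set_self[OF po x]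
    unfolding lower_set_def by blast
  have "(u, v) \<in> (hasse_edges ?J R)\<^sup>*" if "u \<in> ?J" "v \<in> ?J" for u v
  proof -
    have "(x, v) \<in> ((hasse_edges ?J R)\<inverse>)\<^sup>*"
      using to_top[OF that(2)] by (simp add: rtrancl_converse)
    then show ?thesis
      using to_top[OF that(1)] by (simp add: converse_hasse_edges)
  qed
  then show ?thesis
    using order_ideal_lower_set[OF po x] lower_set_self[OF po x]
    unfolding connected_order_ideal_def by blast
qed

lemma finite_gamma_neighbours:
  "finite A \<Longrightarrow> finite {K. connected_order_ideal A R K \<and> intersect_nontrivially J K}"
  by (rule finite_subset[of _ "Pow A"]) (auto simp: connected_order_ideal_def order_ideal_def)

lemma unique_partners_if_gamma_degree_le_1:
  assumes fin: "finite A" and po: "is_poset A R"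
    and deg: "\<And>J. connected_order_ideal A R J \<Longrightarrow> gamma_degree A R J \<le> 1"
  shows "unique_partners A R"
  unfolding unique_partners_def
proof (intro ballI impI)
  fix x y y' assume A: "x \<in> A" "y \<in> A" "y' \<in> A" and p: "partners A R x y \<and> partners A R x y'"
  let ?N = "{K. connected_order_ideal A R K \<and> intersect_nontrivially (lower_set A R x) K}"
  have "lower_set A R y \<in> ?N" "lower_set A R y' \<in> ?N"
    using A p connected_order_ideal_lower_set[OF fin po] intersect_nontrivially_lower_sets_iff[OF po]
    by auto
  moreover have "card ?N \<le> Suc 0"
    using deg[OF connected_order_ideal_lower_set[OF fin po A(1)]] unfolding gamma_degree_def by simp
  ultimately have "lower_set A R y = lower_set A R y'"
    using card_le_Suc0_iff_eq[OF finite_gamma_neighbours[OF fin]] by blast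
  then show "y = y'"
    using lower_set_inject[OF po A(2,3)] by blast
qed

lemma rtrancl_exits_set:
  assumes "(x, y) \<in> r\<^sup>*" "x \<in> S" "y \<notin> S"
  shows "\<exists>p q. (p, q) \<in> r \<and> p \<in> S \<and> q \<notin> S"
  using assms by (induction rule: rtrancl_induct) auto

lemma connected_order_ideal_ex_partner_outside:
  assumes fin: "finite A" and po: "is_poset A R" and J: "connected_order_ideal A R J"
    and M: "M \<noteq> {}" "\<And>m. m \<in> M \<Longrightarrow> maximal_in J R m"
    and ne: "J \<noteq> (\<Union>m\<in>M. lower_set A R m)"
  shows "\<exists>m\<in>M. \<exists>m'. maximal_in J R m' \<and> m' \<notin> M \<and> partners A R m m'"
proof -
  let ?L = "\<Union>m\<in>M. lower_set A R m"
  have JA: "J \<subseteq> A" and low: "\<And>y x. y \<in> J \<Longrightarrow> x \<in> A \<Longrightarrow> R x y \<Longrightarrow> x \<in> J"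
    and conn: "\<And>x y. x \<in> J \<Longrightarrow> y \<in> J \<Longrightarrow> (x, y) \<in> (hasse_edges J R)\<^sup>*"
    using J unfolding connected_order_ideal_def order_ideal_def by blast+
  have "?L \<subseteq> J"
    using M(2) low unfolding lower_set_def by blast
  then obtain y where y: "y \<in> J" "y \<notin> ?L"
    using ne by blast
  obtain x where x: "x \<in> J" "x \<in> ?L"
    using M JA lower_set_self[OF po] by blast
  obtain p q where pq: "(p, q) \<in> hasse_edges J R" "p \<in> ?L" "q \<notin> ?L"
    using rtrancl_exits_set[OF conn[OF x(1) y(1)] x(2) y(2)] by blast
  have pqJ: "q \<in> J" "R p q \<or> R q p" and qA: "q \<in> A"
    using pq(1) JA unfolding hasse_edges_def covers_def by auto
  obtain m where m: "m \<in> M" "p \<in> A" "R p m"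
    using pq(2) unfolding lower_set_def by blast
  have mJ: "maximal_in J R m" and mA: "m \<in> A"
    using M(2)[OF m(1)] JA by blast+
  have "R p q"
  proof (rule ccontr)
    assume "\<not> R p q"
    then have "R q m"
      using pqJ(2) m(3) is_poset_trans[OF po qA m(2) mA] by blast
    then show False
      using pq(3) m(1) qA unfolding lower_set_def by blast
  qed
  obtain m' where m': "maximal_in J R m'" "R q m'"
    using ex_maximal_above[OF finite_subset[OF JA fin] po JA pqJ(1)] by blast
  have m'A: "m' \<in> A"
    using m' JA by blast
  have "m' \<notin> ?L"
  proof
    assume "m' \<in> ?L"
    then obtain n where "n \<in> M" "R m' n"
      unfolding lower_set_def by blast
    moreover have "n \<in> A"
      using M(2)[OF \<open>n \<in> M\<close>] JA by blast
    ultimately have "q \<in> ?L"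
      using m'(2) qA is_poset_trans[OF po qA m'A] unfolding lower_set_def by blast
    then show False
      using pq(3) by blast
  qed
  moreover have "M \<subseteq> ?L"
    using M(2) JA lower_set_self[OF po] by blast
  ultimately have "m' \<notin> M" "m' \<noteq> m"
    using m(1) by blast+
  moreover have "R p m'"
    using is_poset_trans[OF po m(2) qA m'A] \<open>R p q\<close> m'(2) by blast
  moreover have "\<not> R m m'" "\<not> R m' m"
    using mJ m'(1) \<open>m' \<noteq> m\<close> by blast+
  ultimately show ?thesis
    using m m'(1) unfolding partners_def by blast
qed

lemma connected_order_ideal_cases:
  assumes fin: "finite A" and po: "is_poset A R" and unique: "unique_partners A R"
    and J: "connected_order_ideal A R J"
  obtains m where "m \<in> A" "J = lower_set A R m"
  | m1 m2 where "m1 \<in> A" "m2 \<in> A" "partners A R m1 m2"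
      "J = lower_set A R m1 \<union> lower_set A R m2"
proof -
  note outside = connected_order_ideal_ex_partner_outside[OF fin po J]
  have JA: "J \<subseteq> A" and "J \<noteq> {}"
    using J unfolding connected_order_ideal_def order_ideal_def by auto
  then obtain m where m: "maximal_in J R m"
    using ex_maximal_above[OF finite_subset[OF JA fin] po JA] by blast
  show thesis
  proof (cases "J = lower_set A R m")
    case True
    then show thesis
      using that(1) m JA by blast
  next
    case False
    then obtain m' where m': "maximal_in J R m'" "m' \<noteq> m" "partners A R m m'"
      using outside[where M = "{m}"] m by auto
    show thesis
    proof (cases "J = lower_set A R m \<union> lower_set A R m'")
      case True
      then show thesis
        using that(2) m m' JA by blast
    next
      case False
      then have "\<exists>n\<in>{m, m'}. \<exists>m''. maximal_in J R m'' \<and> m'' \<notin> {m, m'} \<and> partners A R n m''"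
        using m m' by (intro outside) auto
      then obtain m'' where m'': "maximal_in J R m''" "m'' \<noteq> m" "m'' \<noteq> m'"
        and "partners A R m m'' \<or> partners A R m' m''"
        by blast
      moreover have "partners A R m' m"
        using partners_sym[OF m'(3)] .
      ultimately show thesis
        using unique_partnersD[OF unique] m m' m'' JA by blast
    qed
  qed
qed

lemma partner_pair_below_if_common_lower_bound:
  assumes po: "is_poset A R" and unique: "unique_partners A R"
    and xy: "x \<in> A" "y \<in> A" "partners A R x y"
    and u: "u \<in> A" "u \<notin> lower_set A R x \<union> lower_set A R y"
    and w: "w \<in> A" "R w u" "R w x"
  shows "R x u \<and> R y u"
proof -
  have le: "R x' u"
    if "x' \<in> A" "y' \<in> A" "partners A R x' y'" "u \<notin> lower_set A R x' \<union> lower_set A R y'"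
      "w' \<in> A" "R w' u" "R w' x'" for x' y' w'
  proof (rule ccontr)
    assume "\<not> R x' u"
    then have "partners A R x' u"
      using that u(1) unfolding partners_def lower_set_def by blast
    then have "u = y'"
      using unique_partnersD[OF unique] that u(1) by blast
    then show False
      using that lower_set_self[OF po] by blast
  qed
  have "R x u"
    using le[OF xy u(2) w] .
  moreover obtain z where z: "z \<in> A" "R z x" "R z y"
    using xy(3) unfolding partners_def by blast
  moreover have "R y u"
    using le[OF xy(2,1) partners_sym[OF xy(3)], of z] u z \<open>R x u\<close> is_poset_trans[OF po z(1) xy(1) u(1)]
    by blast
  ultimately show ?thesis
    by blast
qed

lemma partner_pair_ideal_disjoint_or_nested:
  assumes po: "is_poset A R" and unique: "unique_partners A R"
    and xy: "x \<in> A" "y \<in> A" "partners A R x y" and u: "u \<in> A"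
  defines "P \<equiv> lower_set A R x \<union> lower_set A R y"
  shows "lower_set A R u \<inter> P = {} \<or> lower_set A R u \<subseteq> P \<or> P \<subseteq> lower_set A R u"
proof (cases "u \<in> P")
  case True
  then show ?thesis
    using lower_set_mono[OF po] xy unfolding P_def by blast
next
  case False
  have "P \<subseteq> lower_set A R u" if "w \<in> lower_set A R u \<inter> P" for w
  proof -
    have w: "w \<in> A" "R w u" "R w x \<or> R w y"
      using that unfolding P_def lower_set_def by auto
    have "R x u \<and> R y u"
      using w partner_pair_below_if_common_lower_bound[OF po unique xy u] False
        partner_pair_below_if_common_lower_bound[OF po unique xy(2,1) partners_sym[OF xy(3)] u]
      unfolding P_def by blast
    then show ?thesis
      using lower_set_subset_iff[OF po] xy u unfolding P_def by blast
  qed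
  then show ?thesis
    by blast
qed

lemma partner_pair_ideal_isolated:
  assumes fin: "finite A" and po: "is_poset A R" and unique: "unique_partners A R"
    and xy: "x \<in> A" "y \<in> A" "partners A R x y" and K: "connected_order_ideal A R K"
  shows "\<not> intersect_nontrivially (lower_set A R x \<union> lower_set A R y) K"
  using connected_order_ideal_cases[OF fin po unique K]
proof cases
  case (1 u)
  then show ?thesis
    using partner_pair_ideal_disjoint_or_nested[OF po unique xy] unfolding intersect_nontrivially_def by blast
next
  case (2 u v)
  obtain w where "w \<in> lower_set A R u" "w \<in> lower_set A R v"
    using 2 unfolding partners_def lower_set_def by blast
  then show ?thesis
    using 2 partner_pair_ideal_disjoint_or_nested[OF po unique xy, of u]
      partner_pair_ideal_disjoint_or_nested[OF po unique xy, of v]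
    unfolding intersect_nontrivially_def by blast
qed

lemma gamma_degree_le_1_if_unique_partners:
  assumes fin: "finite A" and po: "is_poset A R" and unique: "unique_partners A R"
    and J: "connected_order_ideal A R J"
  shows "gamma_degree A R J \<le> 1"
proof -
  let ?N = "{K. connected_order_ideal A R K \<and> intersect_nontrivially J K}"
  have "K1 = K2" if "K1 \<in> ?N" "K2 \<in> ?N" for K1 K2
    using connected_order_ideal_cases[OF fin po unique J]
  proof cases
    case (1 x)
    have neighbour: "\<exists>u\<in>A. partners A R x u \<and> K = lower_set A R u" if "K \<in> ?N" for K
    proof -
      have K: "connected_order_ideal A R K" "intersect_nontrivially K J"
        using that intersect_nontrivially_sym by blast+
      show ?thesis
        using connected_order_ideal_cases[OF fin po unique K(1)]
      proof cases
        case (1 u)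
        then show ?thesis
          using K(2) \<open>x \<in> A\<close> \<open>J = lower_set A R x\<close> intersect_nontrivially_lower_sets_iff[OF po]
            partners_sym by metis
      next
        case (2 u v)
        then show ?thesis
          using K(2) partner_pair_ideal_isolated[OF fin po unique] J by blast
      qed
    qed
    then show ?thesis
      using that unique_partnersD[OF unique \<open>x \<in> A\<close>] by metis
  next
    case (2 x y)
    then show ?thesis
      using that partner_pair_ideal_isolated[OF fin po unique] by blast
  qed
  then show ?thesis
    using card_le_Suc0_iff_eq[OF finite_gamma_neighbours[OF fin]] unfolding gamma_degree_def by auto
qed

lemma dup_rel_simps:
  assumes "A \<inter> B = {}" "a' \<notin> A" "a' \<notin> B"
  shows "u \<in> A \<Longrightarrow> v \<in> A \<Longrightarrow> dup_rel A R a B S a' u v \<longleftrightarrow> R u v"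
    and "u \<in> B \<Longrightarrow> v \<in> B \<Longrightarrow> dup_rel A R a B S a' u v \<longleftrightarrow> S u v"
    and "u \<in> B \<Longrightarrow> v \<in> A \<Longrightarrow> dup_rel A R a B S a' u v \<longleftrightarrow> R a v"
    and "u \<in> A \<Longrightarrow> v \<in> B \<Longrightarrow> \<not> dup_rel A R a B S a' u v"
    and "u \<in> A \<Longrightarrow> \<not> dup_rel A R a B S a' u a'"
    and "u \<in> B \<Longrightarrow> dup_rel A R a B S a' u a'"
    and "u \<in> B \<Longrightarrow> \<not> dup_rel A R a B S a' a' u"
    and "u \<in> A \<Longrightarrow> dup_rel A R a B S a' a' u \<longleftrightarrow> u \<noteq> a \<and> R a u"
    and "dup_rel A R a B S a' a' a'"
  using assms unfolding dup_rel_def hang_rel_def disj_union_rel_def by auto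

lemma partners_disj_union:
  assumes "A \<inter> B = {}" and p: "partners (A \<union> B) (disj_union_rel A R B S) x y"
  shows "(x \<in> A \<and> y \<in> A \<and> partners A R x y) \<or> (x \<in> B \<and> y \<in> B \<and> partners B S x y)"
proof -
  obtain z where "z \<in> A \<union> B" "disj_union_rel A R B S z x" "disj_union_rel A R B S z y"
    using p unfolding partners_def by blast
  then show ?thesis
    using assms unfolding partners_def disj_union_rel_def by blast
qed

lemma partners_hang:
  assumes AB: "A \<inter> B = {}" and a: "a \<in> A" and p: "partners (A \<union> B) (hang_rel A R a B S) x y"
  shows "(x \<in> A \<and> y \<in> A \<and> partners A R x y) \<or> (x \<in> B \<and> y \<in> B \<and> partners B S x y)"
proof -
  let ?H = "hang_rel A R a B S"
  have H: "\<And>u v. u \<in> A \<Longrightarrow> v \<in> A \<Longrightarrow> ?H u v \<longleftrightarrow> R u v"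
    "\<And>u v. u \<in> B \<Longrightarrow> v \<in> B \<Longrightarrow> ?H u v \<longleftrightarrow> S u v"
    "\<And>u v. u \<in> B \<Longrightarrow> v \<in> A \<Longrightarrow> ?H u v \<longleftrightarrow> R a v"
    "\<And>u v. u \<in> A \<Longrightarrow> \<not> ?H u v \<or> v \<in> A"
    "\<And>u v. ?H u v \<Longrightarrow> u \<in> A \<union> B \<and> v \<in> A \<union> B"
    using AB unfolding hang_rel_def disj_union_rel_def by auto
  obtain z where z: "z \<in> A \<union> B" "?H z x" "?H z y" and inc: "\<not> ?H x y" "\<not> ?H y x"
    using p unfolding partners_def by blast
  have xy: "x \<in> A \<union> B" "y \<in> A \<union> B"
    using z H(5) by blast+
  show ?thesis
  proof (cases "z \<in> A")
    case True
    then have "x \<in> A" "y \<in> A"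
      using z H(4) by blast+
    then show ?thesis
      using z True inc H(1) unfolding partners_def by blast
  next
    case False
    then have zB: "z \<in> B"
      using z by blast
    consider "x \<in> A" "y \<in> A" | "x \<in> B" "y \<in> B" | "x \<in> A" "y \<in> B" | "x \<in> B" "y \<in> A"
      using xy by blast
    then show ?thesis
    proof cases
      case 1
      then show ?thesis
        using z zB inc H(1,3) a unfolding partners_def by metis
    next
      case 2
      then show ?thesis
        using z zB inc H(2) unfolding partners_def by blast
    qed (use z zB inc H(3) in blast)+
  qed
qed

lemma partners_dup:
  assumes AB: "A \<inter> B = {}" "a' \<notin> A" "a' \<notin> B" and a: "a \<in> A"
    and p: "partners (insert a' (A \<union> B)) (dup_rel A R a B S a') x y"
  shows "(x \<in> A \<and> y \<in> A \<and> partners A R x y) \<or> (x \<in> B \<and> y \<in> B \<and> partners B S x y)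
    \<or> {x, y} = {a, a'}"
proof -
  let ?H = "dup_rel A R a B S a'"
  note D = dup_rel_simps[OF AB]
  obtain z where z: "z \<in> insert a' (A \<union> B)" "?H z x" "?H z y" and inc: "\<not> ?H x y" "\<not> ?H y x"
    using p unfolding partners_def by blast
  have xy: "x \<in> insert a' (A \<union> B)" "y \<in> insert a' (A \<union> B)"
    using z(2,3) AB unfolding dup_rel_def hang_rel_def disj_union_rel_def by auto
  show ?thesis
  proof (cases "x \<in> A \<and> y \<in> A")
    case True
    have "\<exists>w\<in>A. R w x \<and> R w y"
      using z True a AB D(1,3,8) by (cases "z \<in> A"; cases "z = a'") auto
    then show ?thesis
      using True inc D(1) unfolding partners_def by auto
  next
    case False
    have "z \<in> B"
    proof (rule ccontr)
      assume "z \<notin> B"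
      then have "z \<in> A \<or> z = a'"
        using z(1) by blast
      then have "x \<in> A \<and> y \<in> A"
        using xy z(2,3) inc D(4,5,7,9) by blast
      then show False
        using False by blast
    qed
    then have "x \<in> B \<and> y \<in> B \<or> {x, y} = {a, a'}"
      using False xy z inc a AB D(3,6,7,8,9) by auto
    then show ?thesis
      using \<open>z \<in> B\<close> z inc D(2) unfolding partners_def by auto
  qed
qed

lemma unique_partners_if_forest_dup: "forest_dup A R \<Longrightarrow> unique_partners A R"
proof (induction rule: forest_dup.induct)
  case (single x)
  then show ?case
    unfolding unique_partners_def partners_def by auto
next
  case (iso A R f B S)
  have transfer: "partners B S (f x) (f y) \<longleftrightarrow> partners A R x y" if "x \<in> A" "y \<in> A" for x y
    using iso.hyps(2,3) that unfolding partners_def bij_betw_def by auto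
  show ?case
    unfolding unique_partners_def
  proof (intro ballI impI)
    fix u v v'
    assume "u \<in> B" "v \<in> B" "v' \<in> B" and p: "partners B S u v \<and> partners B S u v'"
    then obtain x y y' where "x \<in> A" "y \<in> A" "y' \<in> A" "u = f x" "v = f y" "v' = f y'"
      using iso.hyps(2) unfolding bij_betw_def by blast
    then show "v = v'"
      using p transfer iso.IH unfolding unique_partners_def by blast
  qed
next
  case (union A R B S)
  then show ?case
    using partners_disj_union[OF union.hyps(3)] unfolding unique_partners_def by blast
next
  case (hang A R B S a)
  then show ?case
    using partners_hang[OF hang.hyps(3,4)] unfolding unique_partners_def by blast
next
  case (dup A R B S a a')
  have no_partner_a: "\<not> partners A R a y" for y
    using dup.hyps(5) unfolding partners_def by blast
  show ?case
    unfolding unique_partners_def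
  proof (intro ballI impI)
    fix x y y'
    assume "partners (insert a' (A \<union> B)) (dup_rel A R a B S a') x y \<and>
      partners (insert a' (A \<union> B)) (dup_rel A R a B S a') x y'"
    then have "(x \<in> A \<and> y \<in> A \<and> partners A R x y) \<or> (x \<in> B \<and> y \<in> B \<and> partners B S x y)
        \<or> {x, y} = {a, a'}"
      "(x \<in> A \<and> y' \<in> A \<and> partners A R x y') \<or> (x \<in> B \<and> y' \<in> B \<and> partners B S x y')
        \<or> {x, y'} = {a, a'}"
      using partners_dup[OF dup.hyps(3,6,7,4)] by blast+
    then show "y = y'"
      using dup.IH dup.hyps(3,4,6,7) no_partner_a unfolding unique_partners_def doubleton_eq_iff
      by blast
  qed
qed

lemma forest_dup_cong:
  assumes "forest_dup A S" "A = B" "\<And>x y. x \<in> B \<Longrightarrow> y \<in> B \<Longrightarrow> S x y \<longleftrightarrow> R x y"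
  shows "forest_dup B R"
  using forest_dup.iso[of A S id B R] assms by simp

lemma forest_dup_singleton: "R z z \<Longrightarrow> forest_dup {z} R"
  by (rule forest_dup_cong[OF forest_dup.single]) auto

lemma forest_dup_insert_isolated:
  assumes po: "is_poset A R" and z: "minimal_in A R z" "strict_upper_set A R z = {}"
    and sub: "\<And>S. S \<subset> A \<Longrightarrow> S \<noteq> {} \<Longrightarrow> forest_dup S R"
  shows "forest_dup A R"
proof (cases "A = {z}")
  case True
  then show ?thesis
    using forest_dup_singleton is_poset_refl[OF po] z(1) by simp
next
  case False
  then have "forest_dup (A - {z}) R"
    using z(1) by (intro sub) auto
  then have "forest_dup ((A - {z}) \<union> {z}) (disj_union_rel (A - {z}) R {z} (\<lambda>u v. u = v))"
    by (rule forest_dup.union[OF _ forest_dup.single]) blast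
  then show ?thesis
    by (rule forest_dup_cong)
      (use z is_poset_refl[OF po] in \<open>auto simp: disj_union_rel_def strict_upper_set_def\<close>)
qed

lemma forest_dup_hang_minimal:
  assumes po: "is_poset A R" and z: "minimal_in A R z"
    and a: "a \<in> strict_upper_set A R z" "\<forall>y\<in>strict_upper_set A R z. R a y"
    and sub: "\<And>S. S \<subset> A \<Longrightarrow> S \<noteq> {} \<Longrightarrow> forest_dup S R"
  shows "forest_dup A R"
proof -
  have aA: "a \<in> A - {z}" "R z a"
    using a(1) unfolding strict_upper_set_def by auto
  have upper: "R a y \<longleftrightarrow> R z y" if "y \<in> A - {z}" for y
    using a(2) that aA is_poset_trans[OF po, of z a y] z unfolding strict_upper_set_def by blast
  have "forest_dup (A - {z}) R"
    using z aA by (intro sub) auto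
  then have "forest_dup ((A - {z}) \<union> {z}) (hang_rel (A - {z}) R a {z} (\<lambda>u v. u = v))"
    by (rule forest_dup.hang[OF _ forest_dup.single _ aA(1)]) blast
  then show ?thesis
    by (rule forest_dup_cong)
      (use z upper is_poset_refl[OF po] in \<open>auto simp: hang_rel_def disj_union_rel_def\<close>)
qed

lemma ex_partner_of_minimal_strict_upper:
  assumes fin: "finite A" and po: "is_poset A R" and w: "w \<in> A"
    and p: "minimal_in (strict_upper_set A R w) R p"
    and no_least: "\<not> (\<exists>a\<in>strict_upper_set A R w. \<forall>y\<in>strict_upper_set A R w. R a y)"
  shows "\<exists>p'\<in>strict_upper_set A R w. partners A R p p'"
proof -
  let ?U = "strict_upper_set A R w"
  have UA: "?U \<subseteq> A"
    unfolding strict_upper_set_def by blast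
  obtain y where y: "y \<in> ?U" "\<not> R p y"
    using p no_least by blast
  obtain p' where p': "minimal_in ?U R p'" "R p' y"
    using ex_minimal_below[OF finite_subset[OF UA fin] po UA y(1)] by blast
  have A: "p \<in> A" "p' \<in> A" "y \<in> A"
    using UA p p' y by blast+
  have "\<not> R p p'"
    using p' y is_poset_trans[OF po A] by blast
  moreover have "\<not> R p' p"
    using p p' y by blast
  moreover have "R w p" "R w p'"
    using p p' unfolding strict_upper_set_def by auto
  ultimately show ?thesis
    using p'(1) w unfolding partners_def by blast
qed

lemma partner_le_strict_upper:
  assumes po: "is_poset A R" and unique: "unique_partners A R"
    and a: "a1 \<in> A" "a2 \<in> A" "partners A R a1 a2" and y: "y \<in> strict_upper_set A R a1"
  shows "R a2 y"
proof (rule ccontr)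
  assume "\<not> R a2 y"
  have yA: "y \<in> A" "R a1 y" "y \<noteq> a1"
    using y unfolding strict_upper_set_def by auto
  obtain z where z: "z \<in> A" "R z a1" "R z a2"
    using a unfolding partners_def by blast
  have "\<not> R y a2"
    using is_poset_trans[OF po a(1) yA(1) a(2)] a(3) yA unfolding partners_def by blast
  moreover have "R z y"
    using is_poset_trans[OF po z(1) a(1) yA(1)] z yA by blast
  ultimately have "partners A R a2 y"
    using \<open>\<not> R a2 y\<close> z unfolding partners_def by blast
  then show False
    using unique_partnersD[OF unique a(2) yA(1) a(1)] partners_sym[OF a(3)] yA(3) by blast
qed

lemma le_if_above_strict_lower_set:
  assumes po: "is_poset A R" and unique: "unique_partners A R"
    and a: "a1 \<in> A" "a2 \<in> A" "partners A R a1 a2" and q: "q \<in> strict_lower_set A R a1"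
    and y: "y \<in> A" "R q y" "y \<notin> strict_lower_set A R a1" "y \<noteq> a2"
  shows "R a1 y"
proof (rule ccontr)
  assume "\<not> R a1 y"
  moreover have "\<not> R y a1"
    using y \<open>\<not> R a1 y\<close> is_poset_refl[OF po a(1)] unfolding strict_lower_set_def by blast
  moreover have "R q a1" "q \<in> A"
    using q unfolding strict_lower_set_def by auto
  ultimately have "partners A R a1 y"
    using y unfolding partners_def by blast
  then show False
    using unique_partnersD[OF unique a(1) y(1) a(2)] a(3) y(4) by blast
qed

lemma partner_of_lower_element_le:
  assumes po: "is_poset A R" and unique: "unique_partners A R"
    and a: "a1 \<in> A" "a2 \<in> A" "partners A R a1 a2"
    and x: "x \<in> strict_lower_set A R a1" "x \<notin> strict_lower_set A R a2"
    and w: "w \<in> A" "R w x"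
    and p: "p1 \<in> A" "p2 \<in> A" "R p1 a1" "partners A R p1 p2" "R w p2"
  shows "R p2 a1"
proof (rule ccontr)
  \<comment> \<open>Otherwise p2 would be a second partner of a1, hence p2 = a2, and then x would be a
    partner of a2.\<close>
  assume "\<not> R p2 a1"
  have xA: "x \<in> A" "R x a1" "x \<noteq> a1"
    using x(1) unfolding strict_lower_set_def by auto
  have "R w a1"
    using is_poset_trans[OF po w(1) xA(1) a(1)] w(2) xA(2) by blast
  moreover have "\<not> R a1 p2"
    using is_poset_trans[OF po p(1) a(1) p(2)] p(3,4) unfolding partners_def by blast
  ultimately have "partners A R a1 p2"
    using \<open>\<not> R p2 a1\<close> w(1) p(5) unfolding partners_def by blast
  then have "R w a2"
    using unique_partnersD[OF unique a(1) p(2) a(2)] a(3) p(5) by blast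
  moreover have "\<not> R x a2"
    using x xA a(3) unfolding strict_lower_set_def partners_def by blast
  moreover have "\<not> R a2 x"
    using is_poset_trans[OF po a(2) xA(1) a(1)] xA(2) a(3) unfolding partners_def by blast
  ultimately have "partners A R a2 x"
    using w unfolding partners_def by blast
  then show False
    using unique_partnersD[OF unique a(2) xA(1) a(1)] partners_sym[OF a(3)] xA(3) by blast
qed

lemma strict_lower_set_subset_if_minimal_partners:
  assumes fin: "finite A" and po: "is_poset A R" and unique: "unique_partners A R"
    and no_least: "\<And>w. minimal_in A R w \<Longrightarrow>
        \<not> (\<exists>a\<in>strict_upper_set A R w. \<forall>y\<in>strict_upper_set A R w. R a y)"
    and a: "a1 \<in> A" "a2 \<in> A" "partners A R a1 a2"
    and min: "\<And>b1 b2. b1 \<in> A \<Longrightarrow> b2 \<in> A \<Longrightarrow> partners A R b1 b2 \<Longrightarrow>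
        card (strict_lower_set A R a1 \<union> strict_lower_set A R a2)
          \<le> card (strict_lower_set A R b1 \<union> strict_lower_set A R b2)"
  shows "strict_lower_set A R a1 \<subseteq> strict_lower_set A R a2"
proof
  let ?D = "strict_lower_set A R"
  fix x assume x1: "x \<in> ?D a1"
  show "x \<in> ?D a2"
  proof (rule ccontr)
    assume x2: "x \<notin> ?D a2"
    have x: "x \<in> A" "R x a1" "x \<noteq> a1"
      using x1 unfolding strict_lower_set_def by auto
    obtain w where w: "minimal_in A R w" "R w x"
      using ex_minimal_below[OF fin po _ x(1)] by blast
    let ?U = "strict_upper_set A R w"
    have UA: "?U \<subseteq> A"
      unfolding strict_upper_set_def by blast
    have "R w a1"
      using is_poset_trans[OF po _ x(1) a(1)] w x(2) by blast
    moreover have "w \<noteq> a1"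
      using is_poset_antisym[OF po x(1) a(1)] w x by blast
    ultimately have "a1 \<in> ?U"
      using a unfolding strict_upper_set_def by blast
    then obtain p1 where p1: "minimal_in ?U R p1" "R p1 a1"
      using ex_minimal_below[OF finite_subset[OF UA fin] po UA] by blast
    obtain p2 where p2: "p2 \<in> ?U" "partners A R p1 p2"
      using ex_partner_of_minimal_strict_upper[OF fin po _ p1(1) no_least[OF w(1)]] w by blast
    have pA: "p1 \<in> A" "p2 \<in> A"
      using p1 p2 UA by blast+
    have "R w p2"
      using p2 unfolding strict_upper_set_def by auto
    have "R p2 a1"
      using partner_of_lower_element_le[OF po unique a x1 x2 _ w(2) pA p1(2) p2(2) \<open>R w p2\<close>] w(1) by blast
    have np: "\<not> R p1 p2" "\<not> R p2 p1"
      using p2 unfolding partners_def by auto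
    have sub: "?D p \<subseteq> ?D a1" if "p \<in> A" "R p a1" "p \<noteq> a1" for p
      using that is_poset_trans[OF po _ that(1) a(1)] is_poset_antisym[OF po that(1) a(1)]
      unfolding strict_lower_set_def by blast
    have "?D p1 \<union> ?D p2 \<subseteq> ?D a1"
      using sub pA p1(2) \<open>R p2 a1\<close> np by blast
    moreover have "p1 \<in> ?D a1" "p1 \<notin> ?D p1 \<union> ?D p2"
      using p1(2) pA np \<open>R p2 a1\<close> unfolding strict_lower_set_def by auto
    ultimately have "?D p1 \<union> ?D p2 \<subset> ?D a1 \<union> ?D a2"
      by blast
    then have "card (?D p1 \<union> ?D p2) < card (?D a1 \<union> ?D a2)"
      using fin by (intro psubset_card_mono) (auto simp: strict_lower_set_def)
    then show False
      using min[OF pA p2(2)] by linarith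
  qed
qed

lemma ex_partners_with_equal_strict_lower_sets:
  assumes fin: "finite A" and po: "is_poset A R" and unique: "unique_partners A R"
    and no_least: "\<And>w. minimal_in A R w \<Longrightarrow>
        \<not> (\<exists>a\<in>strict_upper_set A R w. \<forall>y\<in>strict_upper_set A R w. R a y)"
    and p: "p1 \<in> A" "p2 \<in> A" "partners A R p1 p2"
  shows "\<exists>a1\<in>A. \<exists>a2\<in>A. partners A R a1 a2 \<and> strict_lower_set A R a1 = strict_lower_set A R a2"
proof -
  let ?D = "strict_lower_set A R"
  let ?P = "\<lambda>(b1, b2). b1 \<in> A \<and> b2 \<in> A \<and> partners A R b1 b2"
  obtain a1 a2 where a: "?P (a1, a2)"
    and min: "\<And>b. ?P b \<Longrightarrow> card (?D a1 \<union> ?D a2) \<le> card (?D (fst b) \<union> ?D (snd b))"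
    using ex_has_least_nat[of ?P "(p1, p2)" "\<lambda>b. card (?D (fst b) \<union> ?D (snd b))"] p
    by (auto simp: split_def)
  have min': "card (?D a1 \<union> ?D a2) \<le> card (?D b1 \<union> ?D b2)"
    if "b1 \<in> A" "b2 \<in> A" "partners A R b1 b2" for b1 b2
    using min[of "(b1, b2)"] that by simp
  have "?D a1 \<subseteq> ?D a2"
    using strict_lower_set_subset_if_minimal_partners[OF fin po unique no_least] a min' by simp
  moreover have "?D a2 \<subseteq> ?D a1"
    using strict_lower_set_subset_if_minimal_partners[OF fin po unique no_least] a min'
      partners_sym[of A R a1 a2] by (simp add: Un_commute)
  ultimately show ?thesis
    using a by blast
qed

lemma forest_dup_duplicate:
  assumes po: "is_poset A R" and unique: "unique_partners A R"
    and a: "a1 \<in> A" "a2 \<in> A" "partners A R a1 a2"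
    and twins: "strict_lower_set A R a1 = strict_lower_set A R a2"
    and sub: "\<And>S. S \<subset> A \<Longrightarrow> S \<noteq> {} \<Longrightarrow> forest_dup S R"
  shows "forest_dup A R"
proof -
  define B where "B = strict_lower_set A R a1"
  define Q where "Q = A - B - {a2}"
  have B: "x \<in> B \<longleftrightarrow> x \<in> A \<and> R x a1 \<and> x \<noteq> a1" "x \<in> B \<longleftrightarrow> x \<in> A \<and> R x a2 \<and> x \<noteq> a2" for x
    using twins unfolding B_def strict_lower_set_def by blast+
  have na: "\<not> R a1 a2" "\<not> R a2 a1"
    using a(3) unfolding partners_def by auto
  have a1Q: "a1 \<in> Q" and a2: "a2 \<notin> Q" "a2 \<notin> B"
    using a na is_poset_refl[OF po a(2)] B(1) unfolding Q_def by blast+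
  have QB: "Q \<inter> B = {}" and A: "A = insert a2 (Q \<union> B)"
    using a(2) unfolding Q_def B_def strict_lower_set_def by blast+
  have a1_min: "\<forall>y\<in>Q. R y a1 \<longrightarrow> y = a1"
    using B(1) unfolding Q_def by blast
  have "B \<noteq> {}"
    using a(3) na B(1) unfolding partners_def by blast
  then have "forest_dup B R" "forest_dup Q R"
    using a1Q a2 A by (auto intro!: sub)
  then have "forest_dup (insert a2 (Q \<union> B)) (dup_rel Q R a1 B R a2)"
    using a1Q a2 QB a1_min by (intro forest_dup.dup) auto
  then show ?thesis
  proof (rule forest_dup_cong)
    have B_Q: "R x y \<longleftrightarrow> R a1 y" if "x \<in> B" "y \<in> Q" for x y
      using that B(1)[of x] le_if_above_strict_lower_set[OF po unique a, of x y]
        is_poset_trans[OF po _ a(1), of x y]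
      unfolding B_def Q_def by blast
    have Q_B: "\<not> R x y" if "x \<in> Q" "y \<in> B" for x y
      using that B is_poset_trans[OF po _ _ a(1), of x y] is_poset_antisym[OF po _ a(1), of y]
      unfolding Q_def by blast
    have a2_Q: "R a2 y \<longleftrightarrow> y \<noteq> a1 \<and> R a1 y" if "y \<in> Q" for y
      using that a2 na partner_le_strict_upper[OF po unique a] 
        partner_le_strict_upper[OF po unique a(2,1) partners_sym[OF a(3)]]
      unfolding Q_def strict_upper_set_def by blast
    have Q_a2: "\<not> R x a2" if "x \<in> Q" for x
      using that B(2) unfolding Q_def by blast
    have B_a2: "R x a2" if "x \<in> B" for x
      using that B(2) by blast
    have a2_B: "\<not> R a2 y" if "y \<in> B" for y
      using that B(1) is_poset_trans[OF po a(2) _ a(1), of y] na by blast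
    fix x y
    assume "x \<in> A" "y \<in> A"
    then have "x \<in> Q \<or> x \<in> B \<or> x = a2" "y \<in> Q \<or> y \<in> B \<or> y = a2"
      using A by blast+
    then show "dup_rel Q R a1 B R a2 x y \<longleftrightarrow> R x y"
      using dup_rel_simps[OF QB a2(1,2), where R = R and a = a1 and S = R] B_a2 B_Q Q_B a2_Q Q_a2 a2_B
        is_poset_refl[OF po a(2)]
      by (elim disjE) simp_all
  qed (use A in blast)
qed

lemma forest_dup_if_unique_partners:
  "finite A \<Longrightarrow> A \<noteq> {} \<Longrightarrow> is_poset A R \<Longrightarrow> unique_partners A R \<Longrightarrow> forest_dup A R"
proof (induction "card A" arbitrary: A rule: less_induct)
  case less
  note fin = less.prems(1) and po = less.prems(3) and unique = less.prems(4)
  have sub: "forest_dup S R" if "S \<subset> A" "S \<noteq> {}" for S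
    using less.hyps[OF psubset_card_mono[OF fin that(1)] finite_subset[OF _ fin] that(2)
        is_poset_subset[OF po] unique_partners_subset[OF unique]] that
    by blast
  let ?U = "strict_upper_set A R"
  obtain z0 where z0: "minimal_in A R z0"
    using ex_minimal_below[OF fin po] less.prems(2) by blast
  consider (isolated) z where "minimal_in A R z" "?U z = {}"
    | (hang) z a where "minimal_in A R z" "a \<in> ?U z" "\<forall>y\<in>?U z. R a y"
    | (twins) "\<And>z. minimal_in A R z \<Longrightarrow> \<not> (\<exists>a\<in>?U z. \<forall>y\<in>?U z. R a y)" "?U z0 \<noteq> {}"
    using z0 by blast
  then show ?case
  proof cases
    case (isolated z)
    then show ?thesis
      using forest_dup_insert_isolated[OF po _ _ sub] by blast
  next
    case (hang z a)
    then show ?thesis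
      using forest_dup_hang_minimal[OF po _ _ _ sub] by blast
  next
    case twins
    have UA: "?U z0 \<subseteq> A"
      unfolding strict_upper_set_def by blast
    obtain p1 where p1: "minimal_in (?U z0) R p1"
      using ex_minimal_below[OF finite_subset[OF UA fin] po UA] twins(2) by blast
    then obtain p2 where "p2 \<in> ?U z0" "partners A R p1 p2"
      using ex_partner_of_minimal_strict_upper[OF fin po _ p1 twins(1)] z0 by blast
    then obtain a1 a2 where "a1 \<in> A" "a2 \<in> A" "partners A R a1 a2"
        "strict_lower_set A R a1 = strict_lower_set A R a2"
      using ex_partners_with_equal_strict_lower_sets[OF fin po unique twins(1)] p1 UA by blast
    then show ?thesis
      using forest_dup_duplicate[OF po unique _ _ _ _ sub] by blast
  qed
qed

theorem proposition2p3:
  fixes A :: "'a set" and R :: "'a \<Rightarrow> 'a \<Rightarrow> bool"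
  assumes "finite A" and "A \<noteq> {}" and "is_poset A R"
  shows "forest_dup A R \<longleftrightarrow>
         (\<forall>J. connected_order_ideal A R J \<longrightarrow> gamma_degree A R J \<le> 1)"
proof -
  have "forest_dup A R \<longleftrightarrow> unique_partners A R"
    using assms unique_partners_if_forest_dup forest_dup_if_unique_partners by blast
  also have "\<dots> \<longleftrightarrow> (\<forall>J. connected_order_ideal A R J \<longrightarrow> gamma_degree A R J \<le> 1)"
    using assms unique_partners_if_gamma_degree_le_1 gamma_degree_le_1_if_unique_partners by blast
  finally show ?thesis .
qed

end
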